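(* Let $\Lambda:\{-1,1\}^k\to\{0,1\}$ be a predicate, $c\in\mathbb R$, let $\mathcal I^*$ be an instance of $\mathrm{CSP}(\Lambda)$ on $n$ variables with $\mathrm{opt}(\mathcal I^* )=s$, let $f(x)=c-\mathcal I^*(x)$, and let $g:[q]\times[q]\to\{-1,1\}$. Then $M^g_f$ is a submatrix of $\mathcal M_{q\cdot n,s}$ in the following sense: there exist maps $y\mapsto\mathcal I_y$ from $[q]^n$ to $\Lambda^s_{qn}$ and $x\mapsto\tilde x$ from $[q]^n$ to $\{-1,1\}^{qn}$ such that $\mathcal M_{q\cdot n,s}(\mathcal I_y,\tilde x)=M^g_f(x,y)$ for all $x,y\in[q]^n$.
   Context: An instance $\mathcal I$ of $\mathrm{CSP}(\Lambda)$ on $N$ variables is a list of constraints, each a $k$-tuple of literals over the variables; $\mathcal I(x)$ is the fraction of constraints satisfied by $x\in\{-1,1\}^N$ and $\mathrm{opt}(\mathcal I)=\max_x\mathcal I(x)$. $\Lambda^s_N$ denotes the family of all instances of $\mathrm{CSP}(\Lambda)$ on $N$ variables with $\mathrm{opt}(\mathcal I)\le s$, and $\mathcal M_{N,s}:\Lambda^s_N\times\{-1,1\}^N\to\mathbb R$ is the matrix $\mathcal M_{N,s}(\mathcal I,x)=c-\mathcal I(x)$. For $f:\{-1,1\}^n\to\mathbb R$, $M^g_f$ is the $[q]^n\times[q]^n$ matrix with $M^g_f(x,y)=f(g(x_1,y_1),\dots,g(x_n,y_n))$. *)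

theory Defs
  imports Main Complex_Main
begin

text \<open>Variables are indexed 0..N-1. A sign vector in {-1,1}^N is a
function nat => int with values in {-1,1} on indices below N and 0 elsewhere. The predicate Lambda is a function on int lists
(only applied to lists of length k with entries in {-1,1}), bool-valued ({0,1}).
[q] = {0..<q}; [q]^n are functions nat => nat with values below q on indices below n
and 0 elsewhere.\<close>

type_synonym literal = "nat \<times> int"
type_synonym constraint = "literal list"
type_synonym csp_inst = "constraint list"

definition pm_vecs :: "nat \<Rightarrow> (nat \<Rightarrow> int) set" where
  "pm_vecs N = {x. (\<forall>i<N. x i \<in> {-1, 1}) \<and> (\<forall>i\<ge>N. x i = 0)}"

definition q_vecs :: "nat \<Rightarrow> nat \<Rightarrow> (nat \<Rightarrow> nat) set" where
  "q_vecs q n = {x. (\<forall>i<n. x i < q) \<and> (\<forall>i\<ge>n. x i = 0)}"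

definition is_instance :: "nat \<Rightarrow> nat \<Rightarrow> csp_inst \<Rightarrow> bool" where
  "is_instance k N I \<longleftrightarrow> I \<noteq> [] \<and>
     (\<forall>C\<in>set I. length C = k \<and> (\<forall>(i, \<sigma>)\<in>set C. i < N \<and> \<sigma> \<in> {-1, 1}))"

definition sat :: "(int list \<Rightarrow> bool) \<Rightarrow> constraint \<Rightarrow> (nat \<Rightarrow> int) \<Rightarrow> bool" where
  "sat \<Lambda> C x \<longleftrightarrow> \<Lambda> (map (\<lambda>(i, \<sigma>). \<sigma> * x i) C)"

definition inst_val :: "(int list \<Rightarrow> bool) \<Rightarrow> csp_inst \<Rightarrow> (nat \<Rightarrow> int) \<Rightarrow> real" where
  "inst_val \<Lambda> I x = real (length (filter (\<lambda>C. sat \<Lambda> C x) I)) / real (length I)"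

definition opt :: "(int list \<Rightarrow> bool) \<Rightarrow> nat \<Rightarrow> csp_inst \<Rightarrow> real" where
  "opt \<Lambda> N I = Max (inst_val \<Lambda> I ` pm_vecs N)"

definition Lambda_s :: "(int list \<Rightarrow> bool) \<Rightarrow> nat \<Rightarrow> real \<Rightarrow> nat \<Rightarrow> csp_inst set" where
  "Lambda_s \<Lambda> k s N = {I. is_instance k N I \<and> opt \<Lambda> N I \<le> s}"

text \<open>The matrix M_{N,s}(I, x) = c - I(x) (rows restricted to Lambda_s, columns to pm_vecs N).\<close>
definition Mmat :: "(int list \<Rightarrow> bool) \<Rightarrow> real \<Rightarrow> csp_inst \<Rightarrow> (nat \<Rightarrow> int) \<Rightarrow> real" where
  "Mmat \<Lambda> c I x = c - inst_val \<Lambda> I x"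

definition Mgf :: "(nat \<Rightarrow> nat \<Rightarrow> int) \<Rightarrow> ((nat \<Rightarrow> int) \<Rightarrow> real) \<Rightarrow> nat
                   \<Rightarrow> (nat \<Rightarrow> nat) \<Rightarrow> (nat \<Rightarrow> nat) \<Rightarrow> real" where
  "Mgf g f n x y = f (\<lambda>i. if i < n then g (x i) (y i) else 0)"

end

theory Submission
  imports Defs "HOL-Library.FuncSet"
begin

text \<open>Replace each variable \<open>i\<close> of \<open>I*\<close> by \<open>q\<close> copies \<open>(i, b)\<close>, encoded as
\<open>i * q + b\<close>. The instance \<open>I_y\<close> is \<open>I*\<close> with every occurrence of \<open>i\<close> renamed to the
copy \<open>(i, y i)\<close>, and \<open>x~\<close> assigns \<open>g (x i) b\<close> to the copy \<open>(i, b)\<close>; hence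
\<open>I_y(x~) = I*(g(x, y))\<close>. Any assignment to \<open>I_y\<close> is read only on the copies
\<open>(i, y i)\<close>, so it is an assignment to \<open>I*\<close> in disguise and \<open>opt I_y \<le> opt I* = s\<close>.\<close>

lemma finite_pm_vecs: "finite (pm_vecs N)"
proof -
  let ?ext = "\<lambda>f i. if i < N then f i else 0"
  have "pm_vecs N \<subseteq> ?ext ` PiE {..<N} (\<lambda>_. {-1, 1 :: int})"
  proof
    fix x assume x: "x \<in> pm_vecs N"
    then have "restrict x {..<N} \<in> PiE {..<N} (\<lambda>_. {-1, 1})"
      and "x = ?ext (restrict x {..<N})"
      by (auto simp: pm_vecs_def)
    then show "x \<in> ?ext ` PiE {..<N} (\<lambda>_. {-1, 1})" by blast
  qed
  moreover have "finite (PiE {..<N} (\<lambda>_. {-1, 1 :: int}))" by (rule finite_PiE) auto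
  ultimately show ?thesis using finite_surj by blast
qed

lemma pm_vecs_nonempty: "pm_vecs N \<noteq> {}"
proof -
  have "(\<lambda>i. if i < N then 1 else 0) \<in> pm_vecs N" by (auto simp: pm_vecs_def)
  then show ?thesis by blast
qed

lemma inst_val_le_opt: "w \<in> pm_vecs N \<Longrightarrow> inst_val \<Lambda> I w \<le> opt \<Lambda> N I"
  unfolding opt_def using finite_pm_vecs by (intro Max_ge) auto

lemma opt_le:
  assumes "\<And>w. w \<in> pm_vecs N \<Longrightarrow> inst_val \<Lambda> I w \<le> s"
  shows "opt \<Lambda> N I \<le> s"
  unfolding opt_def using assms finite_pm_vecs pm_vecs_nonempty by (subst Max_le_iff) auto

lemma sat_cong:
  assumes "\<And>i \<sigma>. (i, \<sigma>) \<in> set C \<Longrightarrow> z i = z' i"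
  shows "sat \<Lambda> C z = sat \<Lambda> C z'"
  unfolding sat_def using assms by (auto intro!: arg_cong[where f = \<Lambda>])

lemma inst_val_cong:
  assumes "\<And>C i \<sigma>. C \<in> set I \<Longrightarrow> (i, \<sigma>) \<in> set C \<Longrightarrow> z i = z' i"
  shows "inst_val \<Lambda> I z = inst_val \<Lambda> I z'"
proof -
  have "filter (\<lambda>C. sat \<Lambda> C z) I = filter (\<lambda>C. sat \<Lambda> C z') I"
    using assms by (intro filter_cong sat_cong) blast+
  then show ?thesis by (simp add: inst_val_def)
qed

lemma sat_rename: "sat \<Lambda> (map (\<lambda>(i, \<sigma>). (h i, \<sigma>)) C) w = sat \<Lambda> C (w \<circ> h)"
proof -
  have "map (\<lambda>(i, \<sigma>). \<sigma> * w i) (map (\<lambda>(i, \<sigma>). (h i, \<sigma>)) C)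
          = map (\<lambda>(i, \<sigma>). \<sigma> * (w \<circ> h) i) C"
    by auto
  then show ?thesis unfolding sat_def by (rule arg_cong)
qed

lemma inst_val_rename:
  "inst_val \<Lambda> (map (map (\<lambda>(i, \<sigma>). (h i, \<sigma>))) I) w = inst_val \<Lambda> I (w \<circ> h)"
  by (simp add: inst_val_def filter_map comp_def sat_rename)

lemma block_index_less: "(i :: nat) < n \<Longrightarrow> b < q \<Longrightarrow> i * q + b < q * n"
proof -
  assume "i < n" "b < q"
  then have "i * q + b < (i + 1) * q" by simp
  also have "\<dots> \<le> n * q" using \<open>i < n\<close> by (intro mult_right_mono) auto
  finally show ?thesis by (simp add: mult.commute)
qed

definition lift_inst :: "nat \<Rightarrow> (nat \<Rightarrow> nat) \<Rightarrow> csp_inst \<Rightarrow> csp_inst" where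
  "lift_inst q y I = map (map (\<lambda>(i, \<sigma>). (i * q + y i, \<sigma>))) I"

definition lift_assign :: "(nat \<Rightarrow> nat \<Rightarrow> int) \<Rightarrow> nat \<Rightarrow> nat \<Rightarrow> (nat \<Rightarrow> nat) \<Rightarrow> nat \<Rightarrow> int" where
  "lift_assign g q n x = (\<lambda>j. if j < q * n then g (x (j div q)) (j mod q) else 0)"

lemma is_instance_lift_inst:
  assumes "is_instance k n I" and "y \<in> q_vecs q n"
  shows "is_instance k (q * n) (lift_inst q y I)"
  using assms unfolding is_instance_def lift_inst_def q_vecs_def
  by (fastforce intro: block_index_less)

lemma opt_lift_inst_le:
  assumes I: "is_instance k n I" and y: "y \<in> q_vecs q n"
  shows "opt \<Lambda> (q * n) (lift_inst q y I) \<le> opt \<Lambda> n I"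
proof (rule opt_le)
  fix w assume w: "w \<in> pm_vecs (q * n)"
  define w' where "w' = (\<lambda>i. if i < n then w (i * q + y i) else 0)"
  have "w' \<in> pm_vecs n"
    using w y block_index_less unfolding w'_def pm_vecs_def q_vecs_def by auto
  have "inst_val \<Lambda> (lift_inst q y I) w = inst_val \<Lambda> I (\<lambda>i. w (i * q + y i))"
    by (simp add: lift_inst_def inst_val_rename comp_def)
  also have "\<dots> = inst_val \<Lambda> I w'"
    using I by (intro inst_val_cong) (fastforce simp: w'_def is_instance_def)
  also have "\<dots> \<le> opt \<Lambda> n I"
    using \<open>w' \<in> pm_vecs n\<close> by (rule inst_val_le_opt)
  finally show "inst_val \<Lambda> (lift_inst q y I) w \<le> opt \<Lambda> n I" .
qed

lemma lift_assign_in_pm_vecs: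
  assumes x: "x \<in> q_vecs q n" and g: "\<forall>a<q. \<forall>b<q. g a b \<in> {-1, 1}"
  shows "lift_assign g q n x \<in> pm_vecs (q * n)"
proof -
  have "g (x (j div q)) (j mod q) \<in> {-1, 1}" if j: "j < q * n" for j
  proof -
    have "q > 0" using j by (cases q) auto
    then have "j div q < n" using j by (simp add: div_less_iff_less_mult mult.commute)
    then have "x (j div q) < q" using x by (auto simp: q_vecs_def)
    then show ?thesis using g \<open>q > 0\<close> by simp
  qed
  then show ?thesis by (auto simp: pm_vecs_def lift_assign_def)
qed

lemma inst_val_lift:
  assumes I: "is_instance k n I" and y: "y \<in> q_vecs q n"
  shows "inst_val \<Lambda> (lift_inst q y I) (lift_assign g q n x)
           = inst_val \<Lambda> I (\<lambda>i. if i < n then g (x i) (y i) else 0)"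
proof -
  have copy: "lift_assign g q n x (i * q + y i) = g (x i) (y i)" if "i < n" for i
  proof -
    have "y i < q" using y that by (auto simp: q_vecs_def)
    then show ?thesis using block_index_less[OF that] by (simp add: lift_assign_def)
  qed
  have "inst_val \<Lambda> (lift_inst q y I) (lift_assign g q n x)
          = inst_val \<Lambda> I (\<lambda>i. lift_assign g q n x (i * q + y i))"
    by (simp add: lift_inst_def inst_val_rename comp_def)
  also have "\<dots> = inst_val \<Lambda> I (\<lambda>i. if i < n then g (x i) (y i) else 0)"
    using I by (intro inst_val_cong) (fastforce simp: copy is_instance_def)
  finally show ?thesis .
qed

theorem lemma7p3:
  fixes \<Lambda> :: "int list \<Rightarrow> bool" and k n q :: nat and c s :: real
    and Istar :: csp_inst and g :: "nat \<Rightarrow> nat \<Rightarrow> int"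
  assumes "is_instance k n Istar"
    and "opt \<Lambda> n Istar = s"
    and "\<forall>a<q. \<forall>b<q. g a b \<in> {-1, 1}"
  shows "\<exists>Iy xt.
           (\<forall>y\<in>q_vecs q n. Iy y \<in> Lambda_s \<Lambda> k s (q * n)) \<and>
           (\<forall>x\<in>q_vecs q n. xt x \<in> pm_vecs (q * n)) \<and>
           (\<forall>x\<in>q_vecs q n. \<forall>y\<in>q_vecs q n.
              Mmat \<Lambda> c (Iy y) (xt x) = Mgf g (\<lambda>z. c - inst_val \<Lambda> Istar z) n x y)"
proof (intro exI conjI ballI)
  fix y assume "y \<in> q_vecs q n"
  then show "lift_inst q y Istar \<in> Lambda_s \<Lambda> k s (q * n)"
    using assms(1,2) is_instance_lift_inst opt_lift_inst_le by (fastforce simp: Lambda_s_def)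
next
  fix x assume "x \<in> q_vecs q n"
  then show "lift_assign g q n x \<in> pm_vecs (q * n)"
    using assms(3) by (rule lift_assign_in_pm_vecs)
next
  fix x y assume "y \<in> q_vecs q n"
  then show "Mmat \<Lambda> c (lift_inst q y Istar) (lift_assign g q n x)
               = Mgf g (\<lambda>z. c - inst_val \<Lambda> Istar z) n x y"
    using assms(1) by (simp add: Mmat_def Mgf_def inst_val_lift)
qed

end
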